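(* Let $m\ge 3$ and $H=\Theta(l_1,\ldots,l_m)$ with $l_1\ge 2$ and $l_2\ge 4$, and let $G=H^2$. Then $G$ is equitably $k$-choosable for every $k\ge 2m+2$.
   Context: All graphs are finite and simple. $\Theta(l_1,\ldots,l_m)$, with $l_1\le\cdots\le l_m$, denotes the graph consisting of two vertices $u,w$ joined by $m$ internally disjoint paths of lengths $l_1,\ldots,l_m$; the $i$th path is $u, v_{i,1},\ldots,v_{i,l_i-1}, w$. For a graph $H$, $H^2$ has vertex set $V(H)$ with two vertices adjacent iff their distance in $H$ is 1 or 2. A $k$-assignment $L$ assigns to each vertex a set of exactly $k$ colors; an equitable $L$-coloring of $G$ is a proper coloring $f$ with $f(v)\in L(v)$ such that no color is used more than $\lceil |V(G)|/k\rceil$ times; $G$ is equitably $k$-choosable if it has an equitable $L$-coloring for every $k$-assignment $L$. *)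

theory Defs
  imports Complex_Main
begin

text \<open>Vertices of the theta graph: the two poles u, w and the internal
  vertices v_{i,j} of the i-th path (paths indexed 0..m-1 here).\<close>
datatype thv = U | W | Vx nat nat

definition theta_verts :: "nat list \<Rightarrow> thv set" where
  "theta_verts l = {U, W} \<union> {Vx i j | i j. i < length l \<and> 1 \<le> j \<and> j < l ! i}"

definition theta_pt :: "nat list \<Rightarrow> nat \<Rightarrow> nat \<Rightarrow> thv" where
  "theta_pt l i j = (if j = 0 then U else if j = l ! i then W else Vx i j)"

definition theta_adj :: "nat list \<Rightarrow> thv \<Rightarrow> thv \<Rightarrow> bool" where
  "theta_adj l x y = (\<exists>i < length l. \<exists>j < l ! i.
      (x = theta_pt l i j \<and> y = theta_pt l i (Suc j)) \<or>
      (y = theta_pt l i j \<and> x = theta_pt l i (Suc j)))"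

definition graph_sq :: "('a \<Rightarrow> 'a \<Rightarrow> bool) \<Rightarrow> 'a \<Rightarrow> 'a \<Rightarrow> bool" where
  "graph_sq E x y = (x \<noteq> y \<and> (E x y \<or> (\<exists>z. E x z \<and> E z y)))"

definition k_assignment :: "'a set \<Rightarrow> nat \<Rightarrow> ('a \<Rightarrow> 'c set) \<Rightarrow> bool" where
  "k_assignment V k L = (\<forall>v \<in> V. finite (L v) \<and> card (L v) = k)"

definition equitable_L_coloring ::
  "'a set \<Rightarrow> ('a \<Rightarrow> 'a \<Rightarrow> bool) \<Rightarrow> nat \<Rightarrow> ('a \<Rightarrow> 'c set) \<Rightarrow> ('a \<Rightarrow> 'c) \<Rightarrow> bool" where
  "equitable_L_coloring V E k L f =
     ((\<forall>v \<in> V. f v \<in> L v) \<and>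
      (\<forall>x \<in> V. \<forall>y \<in> V. E x y \<longrightarrow> f x \<noteq> f y) \<and>
      (\<forall>c. card {v \<in> V. f v = c} \<le> nat \<lceil>real (card V) / real k\<rceil>))"

end

theory Submission
  imports Defs "HOL-Library.Product_Lexorder"
begin

text \<open>Colour the vertices greedily along a fixed linear order, requiring distinct colours not
  only on adjacent vertices but also inside each class of a partition of the vertices into
  \<open>\<lceil>n/k\<rceil>\<close> classes; then no colour is used more than \<open>\<lceil>n/k\<rceil>\<close> times. A vertex can be
  coloured from its list as long as fewer than \<open>k\<close> earlier vertices conflict with it.
  The inner vertices of the paths come first, path by path, and are cut into classes of
  consecutive vertices, so that their earlier conflicts lie within \<open>k - 1\<close> consecutive ranks.
  The vertices near the poles come last and form the two last classes (of sizes at most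
  \<open>2m + 1\<close> and \<open>2m + 2\<close>, filled up with inner vertices). For each of them the earlier
  neighbours outside its class are matched injectively to later vertices of its class, so its
  conflicts are fewer than the size of its class.\<close>

section \<open>Greedy list colouring with class constraints\<close>

lemma greedy_L_coloring:
  fixes key :: "'a \<Rightarrow> 'b::linorder"
  assumes "finite V" and "inj_on key V" and "k_assignment V k L"
    and R_sym: "\<And>x y. R x y \<Longrightarrow> R y x"
    and few_earlier: "\<And>v. v \<in> V \<Longrightarrow> card {w\<in>V. key w < key v \<and> R v w} < k"
  shows "\<exists>f. (\<forall>v\<in>V. f v \<in> L v) \<and> (\<forall>x\<in>V. \<forall>y\<in>V. x \<noteq> y \<and> R x y \<longrightarrow> f x \<noteq> f y)"
proof -
  define good where "good S f \<longleftrightarrow> (\<forall>v\<in>S. f v \<in> L v) \<and>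
    (\<forall>x\<in>S. \<forall>y\<in>S. x \<noteq> y \<and> R x y \<longrightarrow> f x \<noteq> f y)" for S and f :: "'a \<Rightarrow> 'c"
  have "\<exists>f. good S f" if "finite S" "S \<subseteq> V" for S
    using that
  proof (induction S rule: finite_ranking_induct[where f = key])
    case empty
    show ?case by (simp add: good_def)
  next
    case (insert v S)
    then have sub: "insert v S \<subseteq> V" by blast
    obtain f where f: "good S f" using insert.IH sub by blast
    define D where "D = {w\<in>V. key w < key v \<and> R v w}"
    have "finite D" using \<open>finite V\<close> by (simp add: D_def)
    have "card (f ` D) < card (L v)"
      using card_image_le[OF \<open>finite D\<close>, of f] few_earlier[of v] sub \<open>k_assignment V k L\<close>
      by (auto simp: D_def k_assignment_def)
    then obtain c where c: "c \<in> L v" "c \<notin> f ` D"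
      by (metis card_mono finite_imageI \<open>finite D\<close> not_le subsetI)
    have earlier: "key w < key v" if "w \<in> S" "w \<noteq> v" for w
      using insert.hyps(2)[OF that(1)] \<open>inj_on key V\<close> sub that
      by (metis inj_onD insert_subset le_neq_trans subsetD)
    have "good (insert v S) (f(v := c))"
      using f c earlier sub R_sym unfolding good_def D_def by auto
    then show ?case by blast
  qed
  then show ?thesis using \<open>finite V\<close> unfolding good_def by blast
qed

lemma equitable_L_coloring_if_rainbow_classes:
  assumes "\<forall>v\<in>V. f v \<in> L v"
    and rainbow: "\<forall>x\<in>V. \<forall>y\<in>V. x \<noteq> y \<and> (E x y \<or> part x = part y) \<longrightarrow> f x \<noteq> f y"
    and "\<And>x. \<not> E x x"
    and "part ` V \<subseteq> {..<T}" and "T \<le> nat \<lceil>real (card V) / real k\<rceil>"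
  shows "equitable_L_coloring V E k L f"
  unfolding equitable_L_coloring_def
proof (intro conjI allI)
  show "\<forall>v\<in>V. f v \<in> L v" by fact
  show "\<forall>x\<in>V. \<forall>y\<in>V. E x y \<longrightarrow> f x \<noteq> f y"
  proof (intro ballI impI)
    fix x y assume "x \<in> V" "y \<in> V" "E x y"
    moreover from \<open>E x y\<close> have "x \<noteq> y" using \<open>\<And>x. \<not> E x x\<close> by blast
    ultimately show "f x \<noteq> f y" using rainbow by blast
  qed
next
  fix c
  have "inj_on part {v \<in> V. f v = c}"
    using rainbow by (force intro: inj_onI)
  then have "card {v \<in> V. f v = c} \<le> card {..<T}"
    by (rule card_inj_on_le) (use \<open>part ` V \<subseteq> {..<T}\<close> in auto)
  then show "card {v \<in> V. f v = c} \<le> nat \<lceil>real (card V) / real k\<rceil>"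
    using \<open>T \<le> _\<close> by simp
qed

lemma card_earlier_conflicts_less:
  fixes key :: "'a \<Rightarrow> 'b::linorder"
  assumes "finite V" and "v \<in> V" and class_size: "card {w\<in>V. part w = part v} \<le> k"
    and matched: "card {w\<in>V. key w < key v \<and> E v w \<and> part w \<noteq> part v}
      \<le> card {w\<in>V. part w = part v \<and> key v < key w}"
  shows "card {w\<in>V. key w < key v \<and> (E v w \<or> part w = part v)} < k"
proof -
  let ?Y = "{w\<in>V. key w < key v \<and> E v w \<and> part w \<noteq> part v}"
  let ?P = "{w\<in>V. part w = part v}"
  let ?L = "{w\<in>V. part w = part v \<and> key v < key w}"
  have fin: "finite ?Y" "finite (?P - insert v ?L)" using \<open>finite V\<close> by auto
  have "card {w\<in>V. key w < key v \<and> (E v w \<or> part w = part v)} \<le> card (?Y \<union> (?P - insert v ?L))"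
    by (rule card_mono) (use fin in \<open>auto dest: less_asym\<close>)
  also have "\<dots> \<le> card ?Y + card (?P - insert v ?L)"
    by (rule card_Un_le)
  also have "card (?P - insert v ?L) = card ?P - Suc (card ?L)"
    using \<open>v \<in> V\<close> \<open>finite V\<close> by (subst card_Diff_subset) auto
  finally have "card {w\<in>V. key w < key v \<and> (E v w \<or> part w = part v)}
      \<le> card ?Y + (card ?P - Suc (card ?L))" .
  moreover have "card ?L < card ?P"
    using \<open>v \<in> V\<close> \<open>finite V\<close> by (intro psubset_card_mono) auto
  ultimately show ?thesis using matched class_size by linarith
qed

lemma greedy_equitable_L_coloring:
  fixes key :: "'a \<Rightarrow> 'b::linorder"
  assumes "finite V" and "inj_on key V" and "k_assignment V k L"
    and "\<And>x y. E x y \<Longrightarrow> E y x" and "\<And>x. \<not> E x x"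
    and "part ` V \<subseteq> {..<T}" and "T \<le> nat \<lceil>real (card V) / real k\<rceil>"
    and "\<And>v. v \<in> V \<Longrightarrow> card {w\<in>V. key w < key v \<and> (E v w \<or> part w = part v)} < k"
  shows "\<exists>f. equitable_L_coloring V E k L f"
proof -
  have "\<exists>f. (\<forall>v\<in>V. f v \<in> L v) \<and>
      (\<forall>x\<in>V. \<forall>y\<in>V. x \<noteq> y \<and> (E x y \<or> part y = part x) \<longrightarrow> f x \<noteq> f y)"
    by (rule greedy_L_coloring[OF assms(1-3)]) (use assms(4,8) in auto)
  then obtain f where lists: "\<forall>v\<in>V. f v \<in> L v"
    and rainbow: "\<forall>x\<in>V. \<forall>y\<in>V. x \<noteq> y \<and> (E x y \<or> part y = part x) \<longrightarrow> f x \<noteq> f y"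
    by blast
  have "\<forall>x\<in>V. \<forall>y\<in>V. x \<noteq> y \<and> (E x y \<or> part x = part y) \<longrightarrow> f x \<noteq> f y"
    using rainbow by auto
  with lists have "equitable_L_coloring V E k L f"
    by (rule equitable_L_coloring_if_rainbow_classes) (use assms in blast)+
  then show ?thesis by blast
qed

section \<open>The square of a theta graph\<close>

lemma theta_pt_eq_U_iff: "theta_pt l i j = U \<longleftrightarrow> j = 0"
  by (auto simp: theta_pt_def)

lemma theta_pt_eq_W_iff: "theta_pt l i j = W \<longleftrightarrow> j \<noteq> 0 \<and> j = l!i"
  by (auto simp: theta_pt_def)

lemma theta_pt_eq_Vx_iff: "theta_pt l i j = Vx a b \<longleftrightarrow> j \<noteq> 0 \<and> j \<noteq> l!i \<and> a = i \<and> b = j"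
  by (auto simp: theta_pt_def)

lemma theta_adj_sym: "theta_adj l x y \<Longrightarrow> theta_adj l y x"
  unfolding theta_adj_def by blast

lemma theta_adj_VxD:
  "theta_adj l (Vx a b) z \<Longrightarrow>
    a < length l \<and> ((1 \<le> b \<and> z = theta_pt l a (b - 1)) \<or> z = theta_pt l a (Suc b))"
  unfolding theta_adj_def
  by (auto simp: theta_pt_eq_Vx_iff[symmetric] theta_pt_def split: if_splits)

lemma theta_adj_UD: "theta_adj l U z \<Longrightarrow> \<exists>i < length l. z = theta_pt l i 1"
  unfolding theta_adj_def by (auto simp: theta_pt_def split: if_splits)

lemma theta_adj_WD:
  assumes "theta_adj l W z"
  shows "\<exists>i < length l. z = theta_pt l i (l!i - 1)"
proof -
  obtain i j where "i < length l" "j < l!i"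
    and "(W = theta_pt l i j \<and> z = theta_pt l i (Suc j)) \<or>
      (z = theta_pt l i j \<and> W = theta_pt l i (Suc j))"
    using assms unfolding theta_adj_def by blast
  then have "z = theta_pt l i j" "j = l!i - 1"
    using theta_pt_eq_W_iff[of l i] by (metis less_not_refl, metis less_not_refl diff_Suc_1)
  then show ?thesis using \<open>i < length l\<close> by blast
qed

lemma graph_sq_sym: "(\<And>x y. E x y \<Longrightarrow> E y x) \<Longrightarrow> graph_sq E x y \<Longrightarrow> graph_sq E y x"
  unfolding graph_sq_def by blast

lemma graph_sq_irrefl: "\<not> graph_sq E x x"
  unfolding graph_sq_def by simp

locale theta_square =
  fixes l :: "nat list" and k :: nat
  assumes three_paths: "3 \<le> length l" and sorted_lengths: "sorted l"
    and first_length: "2 \<le> l!0" and second_length: "4 \<le> l!1"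
    and many_colours: "2 * length l + 2 \<le> k"
begin

abbreviation "m \<equiv> length l"
abbreviation "pt \<equiv> theta_pt l"
abbreviation "G \<equiv> graph_sq (theta_adj l)"
abbreviation "V \<equiv> theta_verts l"

lemma length_ge_2: "i < m \<Longrightarrow> 2 \<le> l!i"
  using sorted_nth_mono[OF sorted_lengths, of 0 i] first_length by auto

lemma length_ge_4: "i < m \<Longrightarrow> 1 \<le> i \<Longrightarrow> 4 \<le> l!i"
  using sorted_nth_mono[OF sorted_lengths, of 1 i] second_length by auto

lemma k_ge_8: "8 \<le> k"
  using many_colours three_paths by linarith

lemma Vx_in_V_iff: "Vx i j \<in> V \<longleftrightarrow> i < m \<and> 1 \<le> j \<and> j < l!i"
  by (auto simp: theta_verts_def)

lemma U_in_V: "U \<in> V"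
  by (simp add: theta_verts_def)

lemma finite_V: "finite V"
proof -
  have "V \<subseteq> {U, W} \<union> (\<lambda>(i, j). Vx i j) ` ({..<m} \<times> {..<sum_list l})"
  proof
    fix v assume "v \<in> V"
    then show "v \<in> {U, W} \<union> (\<lambda>(i, j). Vx i j) ` ({..<m} \<times> {..<sum_list l})"
    proof (cases v)
      case (Vx i j)
      then have "i < m" "j < l!i" using \<open>v \<in> V\<close> Vx_in_V_iff by auto
      moreover have "l!i \<le> sum_list l" using \<open>i < m\<close> by (simp add: member_le_sum_list)
      ultimately show ?thesis using Vx by (auto intro!: image_eqI[of _ _ "(i, j)"])
    qed auto
  qed
  then show ?thesis by (rule finite_subset) auto
qed

lemma G_sym: "G x y \<Longrightarrow> G y x"
  using graph_sq_sym theta_adj_sym by metis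

lemma pt_interior: "1 \<le> j \<Longrightarrow> j < l!i \<Longrightarrow> pt i j = Vx i j"
  by (simp add: theta_pt_def)

lemma pt_first: "i < m \<Longrightarrow> pt i 1 = Vx i 1"
  using length_ge_2[of i] by (simp add: pt_interior)

lemma pt_last: "i < m \<Longrightarrow> pt i (l!i - 1) = Vx i (l!i - 1)"
  using length_ge_2[of i] by (simp add: pt_interior)

lemma G_U_neighbour: "G U y \<Longrightarrow> \<exists>i<m. y = Vx i 1 \<or> y = pt i 2"
proof -
  assume g: "G U y"
  then have "y \<noteq> U" unfolding graph_sq_def by auto
  from g consider "theta_adj l U y" | z where "theta_adj l U z" "theta_adj l z y"
    unfolding graph_sq_def by blast
  then show ?thesis
  proof cases
    case 1 then show ?thesis using theta_adj_UD pt_first by blast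
  next
    case 2
    then obtain i where i: "i < m" "z = Vx i 1" using theta_adj_UD pt_first by blast
    then have "y = pt i 0 \<or> y = pt i 2"
      using theta_adj_VxD[of l i 1 y] 2 by (simp add: numeral_2_eq_2)
    then show ?thesis using \<open>y \<noteq> U\<close> i(1) theta_pt_eq_U_iff by blast
  qed
qed

lemma G_W_neighbour: "G W y \<Longrightarrow> \<exists>i<m. y = Vx i (l!i - 1) \<or> y = pt i (l!i - 2)"
proof -
  assume g: "G W y"
  then have "y \<noteq> W" unfolding graph_sq_def by auto
  from g consider "theta_adj l W y" | z where "theta_adj l W z" "theta_adj l z y"
    unfolding graph_sq_def by blast
  then show ?thesis
  proof cases
    case 1 then show ?thesis using theta_adj_WD pt_last by blast
  next
    case 2
    then obtain i where i: "i < m" "z = Vx i (l!i - 1)" using theta_adj_WD pt_last by blast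
    have "Suc (l!i - 1) = l!i" "l!i - 1 - 1 = l!i - 2" using length_ge_2[OF i(1)] by auto
    moreover have "y = pt i (l!i - 1 - 1) \<or> y = pt i (Suc (l!i - 1))"
      using theta_adj_VxD[of l i "l!i - 1" y] 2 i by auto
    moreover have "pt i (l!i) = W" using length_ge_2[OF i(1)] by (simp add: theta_pt_def)
    ultimately show ?thesis using \<open>y \<noteq> W\<close> i(1) by auto
  qed
qed

lemma theta_adj_pt:
  assumes "a < m" "d \<le> l!a" "theta_adj l (pt a d) y"
  shows "(d = 0 \<and> (\<exists>i<m. y = Vx i 1)) \<or> (d = l!a \<and> (\<exists>i<m. y = Vx i (l!i - 1))) \<or>
    (0 < d \<and> d < l!a \<and> (y = pt a (d - 1) \<or> y = pt a (d + 1)))"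
proof -
  consider "d = 0" | "d = l!a" | "0 < d" "d < l!a" using assms(2) by linarith
  then show ?thesis
  proof cases
    case 1
    then show ?thesis using assms(3) theta_adj_UD pt_first by (simp add: theta_pt_def) blast
  next
    case 2
    then have "theta_adj l W y" using assms(3) length_ge_2[OF assms(1)] by (simp add: theta_pt_def)
    then obtain i where "i < m" "y = Vx i (l!i - 1)" using theta_adj_WD pt_last by blast
    with 2 show ?thesis by blast
  next
    case 3
    then show ?thesis using assms(3) theta_adj_VxD[of l a d y] by (simp add: pt_interior)
  qed
qed

lemma G_Vx_neighbour:
  assumes "a < m" "1 \<le> b" "b < l!a" and "G (Vx a b) y"
  shows "y = pt a (b - 2) \<or> y = pt a (b - 1) \<or> y = pt a (b + 1) \<or> y = pt a (b + 2) \<or>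
    (b = 1 \<and> (\<exists>i<m. y = Vx i 1)) \<or> (b + 1 = l!a \<and> (\<exists>i<m. y = Vx i (l!i - 1)))"
proof -
  have "y \<noteq> pt a b" using assms unfolding graph_sq_def by (auto simp: pt_interior)
  have next_to_v: "theta_adj l (Vx a b) z \<Longrightarrow> z = pt a (b - 1) \<or> z = pt a (b + 1)" for z
    using theta_adj_VxD[of l a b z] by auto
  from assms(4) consider "theta_adj l (Vx a b) y"
    | z where "theta_adj l (Vx a b) z" "theta_adj l z y"
    unfolding graph_sq_def by blast
  then show ?thesis
  proof cases
    case 2
    then consider "theta_adj l (pt a (b - 1)) y" | "theta_adj l (pt a (b + 1)) y"
      using next_to_v by blast
    then show ?thesis
    proof cases
      case 1
      have "b - 1 \<le> l!a" using assms(3) by simp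
      from theta_adj_pt[OF assms(1) this 1] show ?thesis
        using assms(2,3) \<open>y \<noteq> pt a b\<close> by (auto simp: numeral_2_eq_2)
    next
      case 2
      have "b + 1 \<le> l!a" using assms(3) by simp
      from theta_adj_pt[OF assms(1) this 2] show ?thesis
        using \<open>y \<noteq> pt a b\<close> by auto
    qed
  qed (use next_to_v in blast)
qed

lemma G_Vx_neighbour_Vx:
  assumes "a < m" "1 \<le> b" "b < l!a" and "G (Vx a b) (Vx i j)" and "2 \<le> j"
  shows "(i = a \<and> (j = b - 2 \<or> j = b - 1 \<or> j = b + 1 \<or> j = b + 2)) \<or> (b + 1 = l!a \<and> j = l!i - 1)"
proof -
  have "\<And>d. Vx i j = pt a d \<Longrightarrow> i = a \<and> j = d"
    using theta_pt_eq_Vx_iff[of l a _ i j] by metis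
  then show ?thesis using G_Vx_neighbour[OF assms(1-4)] assms(5) by fastforce
qed

section \<open>The colouring order\<close>

definition U_side :: "thv set" where
  "U_side = {Vx i j | i j. i < m \<and> 1 \<le> j \<and> j \<le> 2 \<and> j < l!i}"

definition W_side :: "thv set" where
  "W_side = {Vx i j | i j. i < m \<and> 3 \<le> j \<and> j < l!i \<and> l!i \<le> j + 2}"

text \<open>The vertex at distance 3 from \<open>W\<close> on the longest path is not treated as an inner
  vertex: it is an earlier neighbour of the last vertex of that path, which has no later vertex
  in its class to be matched with.\<close>

definition spare :: "thv set" where
  "spare = {Vx (m - 1) j | j. 3 \<le> j \<and> j + 3 = l!(m - 1)}"

definition inner :: "thv set" where
  "inner = {Vx i j | i j. i < m \<and> 3 \<le> j \<and> j + 3 \<le> l!i} - spare"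

definition penultimate_block :: "thv set" where
  "penultimate_block = W_side \<union> spare"

definition final_block :: "thv set" where
  "final_block = U_side \<union> {U, W}"

text \<open>Vertices are coloured in increasing lexicographic order of their keys: inner vertices
  path by path, then the spare vertex, the \<open>W\<close>-side, \<open>W\<close>, the \<open>U\<close>-side (second
  vertices of the paths before first ones), and finally \<open>U\<close>.\<close>

definition colour_key :: "thv \<Rightarrow> nat \<times> nat \<times> nat" where
  "colour_key v = (case v of U \<Rightarrow> (4, 0, 0) | W \<Rightarrow> (2, 0, 0) | Vx i j \<Rightarrow>
     (if j \<le> 2 then (3, 2 - j, i) else if l!i \<le> j + 2 then (1, j + 3 - l!i, i)
      else if i = m - 1 \<and> j + 3 = l!i then (1, 0, 0) else (0, i, j)))"

lemma Vx_in_U_side_iff: "Vx i j \<in> U_side \<longleftrightarrow> i < m \<and> 1 \<le> j \<and> j \<le> 2 \<and> j < l!i"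
  by (auto simp: U_side_def)

lemma Vx_in_W_side_iff: "Vx i j \<in> W_side \<longleftrightarrow> i < m \<and> 3 \<le> j \<and> j < l!i \<and> l!i \<le> j + 2"
  by (auto simp: W_side_def)

lemma Vx_in_spare_iff: "Vx i j \<in> spare \<longleftrightarrow> i = m - 1 \<and> 3 \<le> j \<and> j + 3 = l!i"
  by (auto simp: spare_def)

lemma Vx_in_inner_iff:
  "Vx i j \<in> inner \<longleftrightarrow> i < m \<and> 3 \<le> j \<and> j + 3 \<le> l!i \<and> \<not> (i = m - 1 \<and> j + 3 = l!i)"
  by (auto simp: inner_def Vx_in_spare_iff)

lemma poles_notin:
  "U \<notin> U_side" "W \<notin> U_side" "U \<notin> W_side" "W \<notin> W_side"
  "U \<notin> spare" "W \<notin> spare" "U \<notin> inner" "W \<notin> inner"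
  by (auto simp: U_side_def W_side_def spare_def inner_def)

lemma inner_VxE:
  assumes "v \<in> inner"
  obtains i j where "v = Vx i j" "i < m" "3 \<le> j" "j + 3 \<le> l!i" "\<not> (i = m - 1 \<and> j + 3 = l!i)"
  using assms poles_notin Vx_in_inner_iff by (cases v) auto

lemma colour_key_U_side: "Vx i j \<in> U_side \<Longrightarrow> colour_key (Vx i j) = (3, 2 - j, i)"
  by (simp add: Vx_in_U_side_iff colour_key_def)

lemma colour_key_W_side: "Vx i j \<in> W_side \<Longrightarrow> colour_key (Vx i j) = (1, j + 3 - l!i, i)"
  by (simp add: Vx_in_W_side_iff colour_key_def)

lemma colour_key_spare: "Vx i j \<in> spare \<Longrightarrow> colour_key (Vx i j) = (1, 0, 0)"
  using three_paths by (auto simp: Vx_in_spare_iff colour_key_def)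

lemma colour_key_inner: "Vx i j \<in> inner \<Longrightarrow> colour_key (Vx i j) = (0, i, j)"
  by (simp add: Vx_in_inner_iff colour_key_def)

lemma colour_key_final_block: "v \<in> final_block \<Longrightarrow> 2 \<le> fst (colour_key v)"
  by (cases v) (auto simp: final_block_def U_side_def colour_key_def)

lemma colour_key_penultimate_block: "v \<in> penultimate_block \<Longrightarrow> fst (colour_key v) = 1"
  by (cases v) (auto simp: penultimate_block_def poles_notin colour_key_W_side colour_key_spare)

lemma V_cases:
  assumes "v \<in> V"
  obtains "v \<in> inner" | "v \<in> penultimate_block" | "v \<in> final_block"
proof (cases v)
  case (Vx i j)
  then have "i < m" "1 \<le> j" "j < l!i" using assms Vx_in_V_iff by auto
  then consider "j \<le> 2" | "3 \<le> j" "l!i \<le> j + 2" | "3 \<le> j" "j + 3 \<le> l!i" by linarith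
  then show ?thesis using that Vx \<open>i < m\<close> \<open>1 \<le> j\<close> \<open>j < l!i\<close>
    by cases (auto simp: final_block_def penultimate_block_def Vx_in_U_side_iff Vx_in_W_side_iff
      Vx_in_spare_iff Vx_in_inner_iff)
qed (use that final_block_def in auto)

lemma blocks_disjoint:
  "inner \<inter> penultimate_block = {}" "inner \<inter> final_block = {}"
  "penultimate_block \<inter> final_block = {}"
  by (auto simp: inner_def penultimate_block_def final_block_def U_side_def W_side_def spare_def)

lemma blocks_subset_V: "inner \<subseteq> V" "penultimate_block \<subseteq> V" "final_block \<subseteq> V"
  using three_paths
  by (auto simp: inner_def penultimate_block_def final_block_def U_side_def W_side_def
      spare_def theta_verts_def)

lemma finite_blocks: "finite inner" "finite penultimate_block" "finite final_block"
  using blocks_subset_V finite_V finite_subset by blast+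

lemma card_V: "card V = card inner + card penultimate_block + card final_block"
proof -
  have "V = inner \<union> penultimate_block \<union> final_block"
    using V_cases blocks_subset_V by blast
  then show ?thesis
    using finite_blocks blocks_disjoint by (simp add: card_Un_disjoint Int_Un_distrib2)
qed

lemma inj_on_colour_key: "inj_on colour_key V"
proof (rule inj_onI)
  fix x y assume x: "x \<in> V" and y: "y \<in> V" and e: "colour_key x = colour_key y"
  show "x = y"
  proof (cases x)
    case (Vx i j)
    show ?thesis
    proof (cases y)
      case (Vx i' j')
      then show ?thesis using e \<open>x = Vx i j\<close> x y
        by (auto simp: colour_key_def Vx_in_V_iff split: if_splits)
    qed (use e \<open>x = Vx i j\<close> in \<open>auto simp: colour_key_def split: if_splits\<close>)
  qed (use e in \<open>cases y; auto simp: colour_key_def split: if_splits\<close>)+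
qed

lemma card_U_side: "card U_side \<le> 2 * m"
proof -
  have "U_side \<subseteq> (\<lambda>(i, j). Vx i j) ` ({..<m} \<times> {1, 2})"
    by (auto simp: U_side_def image_iff)
  then have "card U_side \<le> card ({..<m} \<times> {1::nat, 2})"
    by (meson card_image_le card_mono finite_SigmaI finite_imageI finite_lessThan finite.intros
        le_trans)
  then show ?thesis by (simp add: card_cartesian_product)
qed

lemma card_W_side: "card W_side \<le> 2 * m"
proof -
  have "W_side \<subseteq> (\<lambda>(i, d). Vx i (l!i - d)) ` ({..<m} \<times> {1, 2})"
  proof
    fix v assume "v \<in> W_side"
    then obtain i j where "v = Vx i j" "i < m" "3 \<le> j" "j < l!i" "l!i \<le> j + 2"
      by (auto simp: W_side_def)
    then show "v \<in> (\<lambda>(i, d). Vx i (l!i - d)) ` ({..<m} \<times> {1, 2})"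
      by (intro image_eqI[of _ _ "(i, l!i - j)"]) auto
  qed
  then have "card W_side \<le> card ({..<m} \<times> {1::nat, 2})"
    by (meson card_image_le card_mono finite_SigmaI finite_imageI finite_lessThan finite.intros
        le_trans)
  then show ?thesis by (simp add: card_cartesian_product)
qed

lemma card_spare: "card spare \<le> 1"
proof -
  have "spare \<subseteq> {Vx (m - 1) (l!(m - 1) - 3)}"
    by (auto simp: spare_def)
  then have "card spare \<le> card {Vx (m - 1) (l!(m - 1) - 3)}"
    by (rule card_mono[rotated]) simp
  then show ?thesis by simp
qed

lemma card_penultimate_block: "card penultimate_block \<le> k"
  using card_Un_le[of W_side spare] card_W_side card_spare many_colours
  unfolding penultimate_block_def by linarith

lemma card_final_block: "card final_block \<le> k"
  using card_Un_le[of U_side "{U, W}"] card_U_side many_colours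
  unfolding final_block_def by (simp add: card_insert_if)

end

section \<open>Colour classes\<close>

locale theta_square_many_classes = theta_square +
  assumes more_vertices_than_colours: "k < card (theta_verts l)"
begin

definition class_count :: nat where
  "class_count = nat \<lceil>real (card V) / real k\<rceil>"

definition inner_rank :: "thv \<Rightarrow> nat" where
  "inner_rank v = card {u \<in> inner. colour_key u < colour_key v}"

text \<open>Inner vertices are cut by rank into blocks of \<open>k\<close>; the ranks beyond the first
  \<open>class_count - 2\<close> blocks first fill up the class of the penultimate block and then join
  the final block.\<close>

definition inner_class :: "nat \<Rightarrow> nat" where
  "inner_class q = (if q < (class_count - 2) * k then q div k
     else if q + card penultimate_block < (class_count - 1) * k then class_count - 2
     else class_count - 1)"

definition colour_class :: "thv \<Rightarrow> nat" where
  "colour_class v = (if v \<in> final_block then class_count - 1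
     else if v \<in> penultimate_block then class_count - 2 else inner_class (inner_rank v))"

lemma card_V_le: "card V \<le> class_count * k"
proof -
  have "real (card V) / real k \<le> real class_count"
    unfolding class_count_def by linarith
  then have "real (card V) \<le> real class_count * real k"
    using k_ge_8 by (simp add: divide_le_eq)
  then show ?thesis by (metis of_nat_le_iff of_nat_mult)
qed

lemma two_le_class_count: "2 \<le> class_count"
proof -
  have "1 < real (card V) / real k"
    using more_vertices_than_colours k_ge_8 by simp
  then show ?thesis unfolding class_count_def by linarith
qed

lemma class_count_Suc_Suc: obtains P where "class_count = Suc (Suc P)"
  using two_le_class_count by (metis add_2_eq_Suc le_Suc_ex)

lemma blocks_fit: "card inner + card penultimate_block + card final_block \<le> class_count * k"
  using card_V card_V_le by simp

lemma inner_rank_mono: "u \<in> inner \<Longrightarrow> colour_key u < colour_key v \<Longrightarrow> inner_rank u < inner_rank v"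
  unfolding inner_rank_def using finite_blocks(1)
  by (intro psubset_card_mono) (auto intro: finite_subset)

lemma inner_rank_less: "v \<in> inner \<Longrightarrow> inner_rank v < card inner"
  unfolding inner_rank_def using finite_blocks(1) by (intro psubset_card_mono) auto

lemma inj_on_inner_rank: "inj_on inner_rank inner"
proof (rule inj_onI)
  fix x y assume "x \<in> inner" "y \<in> inner" "inner_rank x = inner_rank y"
  then have "colour_key x = colour_key y"
    using inner_rank_mono by (metis less_irrefl neqE)
  then show "x = y"
    using inj_on_colour_key \<open>x \<in> inner\<close> \<open>y \<in> inner\<close> blocks_subset_V by (auto dest: inj_onD)
qed

lemma card_inner_rank_between: "card {u \<in> inner. a \<le> inner_rank u \<and> inner_rank u < b} \<le> b - a"
proof -
  have "card {u \<in> inner. a \<le> inner_rank u \<and> inner_rank u < b} \<le> card {a..<b}"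
    by (rule card_inj_on_le[where f = inner_rank])
      (use inj_on_inner_rank in \<open>auto simp: inj_on_def\<close>)
  then show ?thesis by simp
qed

lemma inner_rank_Suc:
  assumes "Vx i j \<in> inner" and "Vx i (j - 1) \<in> inner"
  shows "inner_rank (Vx i j) = Suc (inner_rank (Vx i (j - 1)))"
proof -
  have "3 < j" using assms Vx_in_inner_iff by auto
  then have earlier: "colour_key (Vx i (j - 1)) < colour_key (Vx i j)"
    using colour_key_inner[OF assms(1)] colour_key_inner[OF assms(2)] by simp
  have "{u \<in> inner. colour_key u < colour_key (Vx i j)} =
      insert (Vx i (j - 1)) {u \<in> inner. colour_key u < colour_key (Vx i (j - 1))}"
  proof (intro equalityI subsetI)
    fix u assume u: "u \<in> {u \<in> inner. colour_key u < colour_key (Vx i j)}"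
    then obtain i' j' where "u = Vx i' j'" "u \<in> inner" by (blast elim: inner_VxE)
    then have "colour_key u = (0, i', j')" using colour_key_inner by blast
    then show "u \<in> insert (Vx i (j - 1)) {u \<in> inner. colour_key u < colour_key (Vx i (j - 1))}"
      using u \<open>3 < j\<close> \<open>u = Vx i' j'\<close> colour_key_inner[OF assms(1)] colour_key_inner[OF assms(2)]
      by auto
  qed (use earlier assms(2) in \<open>auto intro: less_trans\<close>)
  moreover have "finite {u \<in> inner. colour_key u < colour_key (Vx i (j - 1))}"
    using finite_blocks(1) by simp
  ultimately show ?thesis unfolding inner_rank_def by simp
qed

lemma inner_class_less: "inner_class q < class_count"
proof -
  have "q < (class_count - 2) * k \<Longrightarrow> q div k < class_count - 2"
    by (simp add: less_mult_imp_div_less)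
  then show ?thesis using two_le_class_count unfolding inner_class_def by auto
qed

lemma inner_class_eq_imp_close:
  assumes "a < b" "b < card inner" and same: "inner_class a = inner_class b"
  shows "b - a < k"
proof -
  obtain P where P: "class_count = Suc (Suc P)" by (rule class_count_Suc_Suc)
  let ?c = "card penultimate_block"
  have cls: "inner_class q =
      (if q < P * k then q div k else if q + ?c < P * k + k then P else Suc P)" for q
    unfolding inner_class_def P by simp
  have div_less: "q < P * k \<Longrightarrow> q div k < P" for q by (simp add: less_mult_imp_div_less)
  have fit: "card inner + ?c \<le> P * k + 2 * k"
    using blocks_fit P by simp
  consider "b < P * k" | "P * k \<le> b" "b + ?c < P * k + k" | "P * k \<le> b" "P * k + k \<le> b + ?c"
    by linarith
  then show ?thesis
  proof cases
    case 1
    then have "a div k = b div k" using same \<open>a < b\<close> by (simp add: cls)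
    then have "a div k * k = b div k * k" by simp
    moreover have "a div k * k + a mod k = a" "b div k * k + b mod k = b" "b mod k < k"
      using k_ge_8 by simp_all
    ultimately show ?thesis by linarith
  next
    case 2
    then have "inner_class b = P" by (simp add: cls)
    then have "\<not> a < P * k" using same div_less[of a] by (auto simp: cls)
    with 2 show ?thesis by linarith
  next
    case 3
    then have "inner_class b = Suc P" by (simp add: cls)
    then have "\<not> a + ?c < P * k + k" using same div_less[of a] by (auto simp: cls split: if_splits)
    with fit \<open>b < card inner\<close> k_ge_8 show ?thesis by linarith
  qed
qed

lemma inner_class_last_two:
  assumes "class_count - 2 \<le> inner_class q"
  shows "(class_count - 2) * k \<le> q"
proof (rule ccontr)
  assume "\<not> (class_count - 2) * k \<le> q"
  then have "q div k < class_count - 2" by (simp add: less_mult_imp_div_less)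
  with \<open>\<not> (class_count - 2) * k \<le> q\<close> assms show False unfolding inner_class_def by simp
qed

lemma colour_class_less: "colour_class v < class_count"
  using inner_class_less two_le_class_count unfolding colour_class_def by auto

lemma colour_class_final_block: "v \<in> final_block \<Longrightarrow> colour_class v = class_count - 1"
  by (simp add: colour_class_def)

lemma colour_class_penultimate_block: "v \<in> penultimate_block \<Longrightarrow> colour_class v = class_count - 2"
  using blocks_disjoint by (auto simp: colour_class_def)

lemma colour_class_inner: "v \<in> inner \<Longrightarrow> colour_class v = inner_class (inner_rank v)"
  using blocks_disjoint by (auto simp: colour_class_def)

lemma card_penultimate_class: "card {w\<in>V. colour_class w = class_count - 2} \<le> k"
proof -
  obtain P where P: "class_count = Suc (Suc P)" by (rule class_count_Suc_Suc)
  let ?c = "card penultimate_block"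
  let ?R = "{u \<in> inner. P * k \<le> inner_rank u \<and> inner_rank u < P * k + k - ?c}"
  have "{w\<in>V. colour_class w = class_count - 2} \<subseteq> penultimate_block \<union> ?R"
  proof
    fix w assume w: "w \<in> {w\<in>V. colour_class w = class_count - 2}"
    then have "colour_class w \<noteq> class_count - 1" using two_le_class_count by simp
    then have "w \<notin> final_block" using colour_class_final_block by blast
    moreover have "w \<in> ?R" if "w \<in> inner"
    proof -
      have cls: "inner_class (inner_rank w) = P" using w that colour_class_inner P by auto
      then have "\<not> inner_rank w < P * k" using inner_class_last_two[of "inner_rank w"] P by simp
      with cls have "inner_rank w + ?c < P * k + k"
        unfolding inner_class_def P by (simp split: if_splits)
      with \<open>\<not> inner_rank w < P * k\<close> show ?thesis using that by simp
    qed
    ultimately show "w \<in> penultimate_block \<union> ?R" using w V_cases by blast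
  qed
  then have "card {w\<in>V. colour_class w = class_count - 2} \<le> card (penultimate_block \<union> ?R)"
    by (intro card_mono) (use finite_blocks in auto)
  also have "\<dots> \<le> ?c + card ?R" by (rule card_Un_le)
  also have "\<dots> \<le> ?c + (P * k + k - ?c - P * k)"
    using card_inner_rank_between by (meson add_le_mono le_refl)
  also have "\<dots> \<le> k" using card_penultimate_block by linarith
  finally show ?thesis .
qed

lemma card_final_class: "card {w\<in>V. colour_class w = class_count - 1} \<le> k"
proof -
  obtain P where P: "class_count = Suc (Suc P)" by (rule class_count_Suc_Suc)
  let ?c = "card penultimate_block"
  let ?R = "{u \<in> inner. P * k + k - ?c \<le> inner_rank u \<and> inner_rank u < card inner}"
  have "{w\<in>V. colour_class w = class_count - 1} \<subseteq> final_block \<union> ?R"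
  proof
    fix w assume w: "w \<in> {w\<in>V. colour_class w = class_count - 1}"
    then have "colour_class w \<noteq> class_count - 2" using two_le_class_count by simp
    then have "w \<notin> penultimate_block" using colour_class_penultimate_block by blast
    moreover have "w \<in> ?R" if "w \<in> inner"
    proof -
      have cls: "inner_class (inner_rank w) = Suc P" using w that colour_class_inner P by auto
      then have "\<not> inner_rank w < P * k" using inner_class_last_two[of "inner_rank w"] P by simp
      with cls have "\<not> inner_rank w + ?c < P * k + k"
        unfolding inner_class_def P by (simp split: if_splits)
      then show ?thesis using that inner_rank_less by simp
    qed
    ultimately show "w \<in> final_block \<union> ?R" using w V_cases by blast
  qed
  then have "card {w\<in>V. colour_class w = class_count - 1} \<le> card (final_block \<union> ?R)"
    by (intro card_mono) (use finite_blocks in auto)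
  also have "\<dots> \<le> card final_block + card ?R" by (rule card_Un_le)
  also have "\<dots> \<le> card final_block + (card inner - (P * k + k - ?c))"
    using card_inner_rank_between by (meson add_le_mono le_refl)
  also have "\<dots> \<le> k" using blocks_fit card_final_block P k_ge_8 by (simp add: algebra_simps)
  finally show ?thesis .
qed

section \<open>Counting conflicts\<close>

lemma inner_if_earlier_than_inner:
  assumes "w \<in> V" "v \<in> inner" "colour_key w < colour_key v"
  shows "w \<in> inner"
proof -
  obtain i j where "v = Vx i j" "v \<in> inner" using assms(2) by (blast elim: inner_VxE)
  then have "fst (colour_key w) = 0" using assms(3) colour_key_inner by (cases "colour_key w") auto
  then show ?thesis using assms(1) V_cases colour_key_penultimate_block colour_key_final_block
    by (metis not_numeral_le_zero zero_neq_one)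
qed

lemma inner_rank_earlier_neighbour:
  assumes "v \<in> inner" "w \<in> inner" "colour_key w < colour_key v" "G v w"
  shows "inner_rank v - inner_rank w \<le> 2"
proof -
  obtain i j where v: "v = Vx i j" "i < m" "3 \<le> j" "j + 3 \<le> l!i"
    using assms(1) by (blast elim: inner_VxE)
  obtain i' j' where w: "w = Vx i' j'" using assms(2) by (blast elim: inner_VxE)
  have "w = pt i (j - 2) \<or> w = pt i (j - 1) \<or> w = pt i (j + 1) \<or> w = pt i (j + 2)"
    using G_Vx_neighbour[of i j w] v assms(4) by auto
  then have "w = Vx i (j - 2) \<or> w = Vx i (j - 1) \<or> w = Vx i (j + 1) \<or> w = Vx i (j + 2)"
    using v pt_interior[of "j - 2" i] pt_interior[of "j - 1" i] pt_interior[of "j + 1" i]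
      pt_interior[of "j + 2" i] by auto
  then consider "w = Vx i (j - 1)" | "w = Vx i (j - 2)"
    using assms(3) colour_key_inner assms(1,2) v w by fastforce
  then show ?thesis
  proof cases
    case 1
    then show ?thesis using inner_rank_Suc assms(1,2) v by simp
  next
    case 2
    then have "Vx i (j - 1) \<in> inner" using assms(1,2) v Vx_in_inner_iff by auto
    moreover have "j - 1 - 1 = j - 2" by simp
    ultimately show ?thesis
      using inner_rank_Suc[of i j] inner_rank_Suc[of i "j - 1"] assms(1,2) v 2 by simp
  qed
qed

lemma card_earlier_conflicts_inner:
  assumes "v \<in> inner"
  shows "card {w\<in>V. colour_key w < colour_key v \<and> (G v w \<or> colour_class w = colour_class v)} < k"
proof -
  let ?S = "{w\<in>V. colour_key w < colour_key v \<and> (G v w \<or> colour_class w = colour_class v)}"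
  have "?S \<subseteq> {u\<in>inner. inner_rank v - (k - 1) \<le> inner_rank u \<and> inner_rank u < inner_rank v}"
  proof
    fix w assume w: "w \<in> ?S"
    then have "w \<in> inner" using inner_if_earlier_than_inner assms by blast
    have earlier: "inner_rank w < inner_rank v" using inner_rank_mono \<open>w \<in> inner\<close> w by simp
    have "inner_rank v - inner_rank w < k"
    proof (cases "colour_class w = colour_class v")
      case True
      then have "inner_class (inner_rank w) = inner_class (inner_rank v)"
        using colour_class_inner \<open>w \<in> inner\<close> assms by simp
      then show ?thesis using inner_class_eq_imp_close earlier inner_rank_less assms by blast
    next
      case False
      then show ?thesis using inner_rank_earlier_neighbour assms \<open>w \<in> inner\<close> w k_ge_8 by fastforce
    qed
    then show "w \<in> {u\<in>inner. inner_rank v - (k - 1) \<le> inner_rank u \<and> inner_rank u < inner_rank v}"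
      using \<open>w \<in> inner\<close> earlier by auto
  qed
  then have "card ?S
      \<le> card {u\<in>inner. inner_rank v - (k - 1) \<le> inner_rank u \<and> inner_rank u < inner_rank v}"
    by (intro card_mono) (use finite_blocks in auto)
  also have "\<dots> \<le> inner_rank v - (inner_rank v - (k - 1))" by (rule card_inner_rank_between)
  also have "\<dots> < k" using k_ge_8 by linarith
  finally show ?thesis .
qed

lemma card_earlier_neighbours_le_later_classmates:
  assumes "B \<subseteq> V" "v \<in> B" "\<And>u. u \<in> B \<Longrightarrow> colour_class u = colour_class v"
    and "{w\<in>V. colour_key w < colour_key v \<and> G v w \<and> colour_class w \<noteq> colour_class v} \<subseteq> Y"
    and "finite Y" "inj_on f Y" "f ` Y \<subseteq> {w\<in>B. colour_key v < colour_key w}"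
  shows "card {w\<in>V. colour_key w < colour_key v \<and> G v w \<and> colour_class w \<noteq> colour_class v}
    \<le> card {w\<in>V. colour_class w = colour_class v \<and> colour_key v < colour_key w}"
proof -
  have "card {w\<in>V. colour_key w < colour_key v \<and> G v w \<and> colour_class w \<noteq> colour_class v} \<le> card Y"
    using assms(4,5) by (rule card_mono[rotated])
  also have "\<dots> \<le> card {w\<in>B. colour_key v < colour_key w}"
    using assms(6,7) finite_subset[OF assms(1) finite_V] by (intro card_inj_on_le) auto
  also have "\<dots> \<le> card {w\<in>V. colour_class w = colour_class v \<and> colour_key v < colour_key w}"
    using assms(1,3) finite_V by (intro card_mono) auto
  finally show ?thesis .
qed

lemma outside_final_blockE:
  assumes "w \<in> V" "w \<notin> final_block"
  obtains i j where "w = Vx i j" "i < m" "3 \<le> j" "j < l!i"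
  using assms by (cases w) (auto simp: final_block_def Vx_in_U_side_iff Vx_in_V_iff)

definition mirror :: "thv \<Rightarrow> thv" where
  "mirror v = (case v of Vx i j \<Rightarrow> Vx i (l!i - j) | _ \<Rightarrow> v)"

lemma mirror_Vx [simp]: "mirror (Vx i j) = Vx i (l!i - j)"
  by (simp add: mirror_def)

lemma inj_on_mirror_W_side: "inj_on mirror W_side"
  by (auto simp: inj_on_def W_side_def)

lemma mirror_W_side: "Vx i j \<in> W_side \<Longrightarrow> mirror (Vx i j) \<in> U_side"
  by (auto simp: W_side_def U_side_def)

lemma earlier_neighbours_matched_W:
  "card {w\<in>V. colour_key w < colour_key W \<and> G W w \<and> colour_class w \<noteq> colour_class W}
    \<le> card {w\<in>V. colour_class w = colour_class W \<and> colour_key W < colour_key w}"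
proof (rule card_earlier_neighbours_le_later_classmates[where B = final_block and f = mirror])
  show "{w\<in>V. colour_key w < colour_key W \<and> G W w \<and> colour_class w \<noteq> colour_class W} \<subseteq> W_side"
  proof
    fix w
    assume w: "w \<in> {w\<in>V. colour_key w < colour_key W \<and> G W w \<and> colour_class w \<noteq> colour_class W}"
    then have "w \<in> V" "w \<notin> final_block" using colour_class_final_block final_block_def by auto
    then obtain i j where ij: "w = Vx i j" "i < m" "3 \<le> j" "j < l!i"
      by (rule outside_final_blockE)
    obtain i' where i': "i' < m" "w = Vx i' (l!i' - 1) \<or> w = pt i' (l!i' - 2)"
      using G_W_neighbour w by blast
    have "pt i' (l!i' - 2) = U \<or> pt i' (l!i' - 2) = Vx i' (l!i' - 2)"
      using length_ge_2[OF i'(1)] by (auto simp: theta_pt_def)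
    then have "i = i' \<and> (j = l!i - 1 \<or> j = l!i - 2)" using i' ij by auto
    then show "w \<in> W_side" using ij Vx_in_W_side_iff by auto
  qed
  show "mirror ` W_side \<subseteq> {w\<in>final_block. colour_key W < colour_key w}"
    using mirror_W_side colour_key_U_side
    by (fastforce simp: W_side_def final_block_def colour_key_def)
qed (use blocks_subset_V colour_class_final_block finite_blocks W_side_def
       inj_on_mirror_W_side penultimate_block_def final_block_def in auto)

lemma earlier_neighbours_matched_U:
  "card {w\<in>V. colour_key w < colour_key U \<and> G U w \<and> colour_class w \<noteq> colour_class U}
    \<le> card {w\<in>V. colour_class w = colour_class U \<and> colour_key U < colour_key w}"
proof -
  have "w \<in> final_block" if "G U w" for w
  proof -
    obtain i where i: "i < m" "w = Vx i 1 \<or> w = pt i 2" using G_U_neighbour \<open>G U w\<close> by blast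
    have "pt i 2 = (if l!i = 2 then W else Vx i 2)" by (simp add: theta_pt_def)
    then show ?thesis
      using i length_ge_2[OF i(1)] by (auto simp: final_block_def Vx_in_U_side_iff split: if_splits)
  qed
  then have "{w\<in>V. colour_key w < colour_key U \<and> G U w \<and> colour_class w \<noteq> colour_class U} = {}"
    using colour_class_final_block final_block_def by auto
  then show ?thesis by (metis card.empty zero_le)
qed

lemma U_side_neighbour_outside_final_block:
  assumes "Vx a b \<in> U_side" "w \<in> V" "w \<notin> final_block" "G (Vx a b) w"
  shows "\<exists>i j. w = Vx i j \<and> i < m \<and> 3 \<le> j \<and> j < l!i \<and>
    ((i = a \<and> (j = b + 1 \<or> j = b + 2)) \<or> (b + 1 = l!a \<and> j = l!i - 1))"
proof -
  obtain i j where "w = Vx i j" "i < m" "3 \<le> j" "j < l!i"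
    using assms(2,3) by (rule outside_final_blockE)
  moreover have "a < m" "1 \<le> b" "b \<le> 2" "b < l!a" using assms(1) Vx_in_U_side_iff by auto
  ultimately show ?thesis using G_Vx_neighbour_Vx[of a b i j] assms(4) by auto
qed

lemma earlier_neighbours_matched_U_side_long_path:
  assumes v: "Vx a b \<in> U_side" and "b + 1 < l!a"
  shows "card {w\<in>V. colour_key w < colour_key (Vx a b) \<and> G (Vx a b) w \<and>
      colour_class w \<noteq> colour_class (Vx a b)}
    \<le> card {w\<in>V. colour_class w = colour_class (Vx a b) \<and> colour_key (Vx a b) < colour_key w}"
proof -
  have v_final: "Vx a b \<in> final_block" using v by (simp add: final_block_def)
  let ?Y = "{w\<in>V. colour_key w < colour_key (Vx a b) \<and> G (Vx a b) w \<and> w \<notin> final_block}"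
  let ?f = "\<lambda>w. if w = Vx a (b + 2) then U else Vx a (b - 1)"
  have Y: "w = Vx a (b + 2) \<or> (w = Vx a 3 \<and> b = 2)" if "w \<in> ?Y" for w
    using U_side_neighbour_outside_final_block[OF v, of w] that \<open>b + 1 < l!a\<close> v
    by (auto simp: Vx_in_U_side_iff)
  show ?thesis
  proof (rule card_earlier_neighbours_le_later_classmates[OF _ v_final, where Y = ?Y and f = ?f])
    show "?f ` ?Y \<subseteq> {w \<in> final_block. colour_key (Vx a b) < colour_key w}"
    proof
      fix x assume "x \<in> ?f ` ?Y"
      then obtain w where w: "w \<in> ?Y" "x = ?f w" by blast
      have "Vx a 1 \<in> U_side" using v by (simp add: Vx_in_U_side_iff)
      then show "x \<in> {w \<in> final_block. colour_key (Vx a b) < colour_key w}"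
        using Y[OF w(1)] w(2) colour_key_U_side[OF v] colour_key_U_side[of a 1]
        by (cases "w = Vx a (b + 2)") (simp_all add: final_block_def colour_key_def)
    qed
    have "?Y \<subseteq> {Vx a (b + 2), Vx a 3}" using Y by blast
    then show "inj_on ?f ?Y" by (rule inj_on_subset[rotated]) (auto simp: inj_on_def)
  qed (use blocks_subset_V colour_class_final_block v_final finite_V in auto)
qed

lemma earlier_neighbours_matched_U_side_short_path:
  assumes v: "Vx a b \<in> U_side" and "b + 1 = l!a"
  shows "card {w\<in>V. colour_key w < colour_key (Vx a b) \<and> G (Vx a b) w \<and>
      colour_class w \<noteq> colour_class (Vx a b)}
    \<le> card {w\<in>V. colour_class w = colour_class (Vx a b) \<and> colour_key (Vx a b) < colour_key w}"
proof -
  have v_final: "Vx a b \<in> final_block" using v by (simp add: final_block_def)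
  have "a < m" "1 \<le> b" "b \<le> 2" using v by (auto simp: Vx_in_U_side_iff)
  then have "\<not> 1 \<le> a" using length_ge_4[of a] \<open>b + 1 = l!a\<close> by auto
  then have "a = 0" by simp
  let ?Y = "{w\<in>V. colour_key w < colour_key (Vx a b) \<and> G (Vx a b) w \<and> w \<notin> final_block}"
  have Y: "\<exists>i. w = Vx i (l!i - 1) \<and> 0 < i \<and> i < m \<and> 4 \<le> l!i" if w: "w \<in> ?Y" for w
  proof -
    obtain i j where ij: "w = Vx i j" "i < m" "3 \<le> j" "j < l!i"
      and "(i = a \<and> (j = b + 1 \<or> j = b + 2)) \<or> (b + 1 = l!a \<and> j = l!i - 1)"
      using U_side_neighbour_outside_final_block[OF v, of w] w by blast
    then have "j = l!i - 1" using \<open>b + 1 = l!a\<close> by auto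
    moreover have "i \<noteq> 0"
      using ij \<open>j = l!i - 1\<close> \<open>b + 1 = l!a\<close> \<open>a = 0\<close> \<open>b \<le> 2\<close> by (cases "i = 0") auto
    ultimately show ?thesis using ij length_ge_4[of i] by auto
  qed
  have "?Y \<subseteq> W_side" using Y by (force simp: Vx_in_W_side_iff)
  show ?thesis
  proof (rule card_earlier_neighbours_le_later_classmates[OF _ v_final,
        where Y = ?Y and f = mirror])
    show "mirror ` ?Y \<subseteq> {w \<in> final_block. colour_key (Vx a b) < colour_key w}"
    proof
      fix x assume "x \<in> mirror ` ?Y"
      then obtain i where i: "x = mirror (Vx i (l!i - 1))" "0 < i" "i < m" "4 \<le> l!i"
        using Y by blast
      then have "x = Vx i 1" "Vx i 1 \<in> U_side" by (simp_all add: Vx_in_U_side_iff)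
      then show "x \<in> {w \<in> final_block. colour_key (Vx a b) < colour_key w}"
        using colour_key_U_side[OF v] colour_key_U_side[of i 1] \<open>a = 0\<close> \<open>0 < i\<close> \<open>1 \<le> b\<close>
        by (auto simp: final_block_def)
    qed
    show "inj_on mirror ?Y"
      using inj_on_mirror_W_side \<open>?Y \<subseteq> W_side\<close> by (rule inj_on_subset)
  qed (use blocks_subset_V colour_class_final_block v_final finite_V in auto)
qed

lemma earlier_neighbours_matched_U_side:
  assumes "v \<in> U_side"
  shows "card {w\<in>V. colour_key w < colour_key v \<and> G v w \<and> colour_class w \<noteq> colour_class v}
    \<le> card {w\<in>V. colour_class w = colour_class v \<and> colour_key v < colour_key w}"
proof -
  obtain a b where "v = Vx a b" "b < l!a" using assms by (auto simp: U_side_def)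
  then show ?thesis
    using assms earlier_neighbours_matched_U_side_long_path
      earlier_neighbours_matched_U_side_short_path
    by (cases "b + 1 < l!a") auto
qed

lemma earlier_outside_class_of_penultimate:
  assumes "v \<in> penultimate_block" "w \<in> V" "colour_key w < colour_key v"
    and "colour_class w \<noteq> colour_class v"
  shows "w \<in> inner"
proof -
  have "w \<notin> penultimate_block" using assms colour_class_penultimate_block by metis
  moreover have "w \<notin> final_block"
  proof
    assume "w \<in> final_block"
    then have "2 \<le> fst (colour_key w)" by (rule colour_key_final_block)
    moreover have "fst (colour_key w) \<le> 1"
      using assms(3) colour_key_penultimate_block[OF assms(1)] by (auto simp: less_prod_def)
    ultimately show False by simp
  qed
  ultimately show ?thesis using assms(2) V_cases by blast
qed

lemma earlier_neighbours_matched_spare: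
  assumes "v \<in> spare"
  shows "card {w\<in>V. colour_key w < colour_key v \<and> G v w \<and> colour_class w \<noteq> colour_class v}
    \<le> card {w\<in>V. colour_class w = colour_class v \<and> colour_key v < colour_key w}"
proof -
  define a L where "a = m - 1" and "L = l!(m - 1)"
  obtain j where v: "v = Vx a j" "3 \<le> j" "j + 3 = L"
    using assms by (auto simp: spare_def a_def L_def)
  have "a < m" using three_paths by (simp add: a_def)
  have v_pen: "v \<in> penultimate_block" using assms by (simp add: penultimate_block_def)
  have key_v: "colour_key v = (1, 0, 0)" using colour_key_spare assms v(1) by simp
  let ?Y = "{w\<in>inner. colour_key w < colour_key v \<and> G v w}"
  have sub: "?Y \<subseteq> {Vx a (L - 5), Vx a (L - 4)}"
  proof
    fix w assume w: "w \<in> ?Y"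
    then obtain i j' where ij: "w = Vx i j'" "i < m" "3 \<le> j'" "j' + 3 \<le> l!i"
      by (blast elim: inner_VxE)
    then have "(i = a \<and> (j' = j - 2 \<or> j' = j - 1 \<or> j' = j + 1 \<or> j' = j + 2)) \<or>
        (j + 1 = L \<and> j' = l!i - 1)"
      using G_Vx_neighbour_Vx[of a j i j'] w v \<open>a < m\<close> by (auto simp: L_def a_def)
    then have "i = a" "j' = j - 2 \<or> j' = j - 1" using ij v by (auto simp: L_def a_def)
    moreover have "j - 2 = L - 5" "j - 1 = L - 4" using v by simp_all
    ultimately show "w \<in> {Vx a (L - 5), Vx a (L - 4)}" using ij by auto
  qed
  let ?f = "\<lambda>w. if w = Vx a (L - 5) then Vx a (L - 1) else Vx a (L - 2)"
  show ?thesis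
  proof (rule card_earlier_neighbours_le_later_classmates[OF _ v_pen, where Y = ?Y and f = ?f])
    have "Vx a (L - 1) \<in> W_side" "Vx a (L - 2) \<in> W_side"
      using \<open>a < m\<close> v by (auto simp: Vx_in_W_side_iff L_def a_def)
    then show "?f ` ?Y \<subseteq> {w \<in> penultimate_block. colour_key v < colour_key w}"
      using sub key_v colour_key_W_side v by (auto simp: penultimate_block_def L_def a_def)
    show "inj_on ?f ?Y"
      using sub by (rule inj_on_subset[rotated]) (use v in \<open>auto simp: inj_on_def\<close>)
    show "{w\<in>V. colour_key w < colour_key v \<and> G v w \<and> colour_class w \<noteq> colour_class v} \<subseteq> ?Y"
      using earlier_outside_class_of_penultimate[OF v_pen] by blast
    show "finite ?Y" using finite_blocks(1) by simp
  qed (use blocks_subset_V colour_class_penultimate_block v_pen in auto)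
qed

lemma last_vertex_of_longest_path:
  "Vx (m - 1) (l!(m - 1) - 1) \<in> W_side" "colour_key (Vx (m - 1) (l!(m - 1) - 1)) = (1, 2, m - 1)"
proof -
  have "m - 1 < m" "1 \<le> m - 1" using three_paths by auto
  then have "4 \<le> l!(m - 1)" by (rule length_ge_4)
  with \<open>m - 1 < m\<close> show "Vx (m - 1) (l!(m - 1) - 1) \<in> W_side"
    by (simp add: Vx_in_W_side_iff)
  then show "colour_key (Vx (m - 1) (l!(m - 1) - 1)) = (1, 2, m - 1)"
    using \<open>4 \<le> l!(m - 1)\<close> by (simp add: colour_key_W_side)
qed

lemma W_side_inner_neighbour:
  assumes "Vx a b \<in> W_side" "w \<in> inner" "G (Vx a b) w"
  shows "(w = Vx a (l!a - 4) \<and> b = l!a - 2) \<or> (w = Vx a (l!a - 3) \<and> a \<noteq> m - 1)"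
proof -
  define L where "L = l!a"
  have v: "a < m" "3 \<le> b" "b < L" "L \<le> b + 2" using assms(1) by (auto simp: W_side_def L_def)
  obtain i j where ij: "w = Vx i j" "i < m" "3 \<le> j" "j + 3 \<le> l!i" "\<not> (i = m - 1 \<and> j + 3 = l!i)"
    using assms(2) by (blast elim: inner_VxE)
  then have "(i = a \<and> (j = b - 2 \<or> j = b - 1 \<or> j = b + 1 \<or> j = b + 2)) \<or> (b + 1 = L \<and> j = l!i - 1)"
    using G_Vx_neighbour_Vx[of a b i j] assms(3) v by (auto simp: L_def)
  then have "i = a" "j = b - 2 \<or> j = b - 1" using ij v by (auto simp: L_def)
  then have "j + 3 \<le> L" "w = Vx a j" "\<not> (a = m - 1 \<and> j + 3 = L)" using ij by (simp_all add: L_def)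
  show ?thesis
  proof (cases "j + 3 = L")
    case True
    then have "j = L - 3" by simp
    with True show ?thesis using \<open>w = Vx a j\<close> \<open>\<not> (a = m - 1 \<and> j + 3 = L)\<close> by (simp add: L_def)
  next
    case False
    then have "j = L - 4" "b = L - 2"
      using \<open>j = b - 2 \<or> j = b - 1\<close> v \<open>j + 3 \<le> L\<close> by linarith+
    then show ?thesis using \<open>w = Vx a j\<close> by (simp add: L_def)
  qed
qed

lemma earlier_neighbours_matched_W_side:
  assumes "v \<in> W_side"
  shows "card {w\<in>V. colour_key w < colour_key v \<and> G v w \<and> colour_class w \<noteq> colour_class v}
    \<le> card {w\<in>V. colour_class w = colour_class v \<and> colour_key v < colour_key w}"
proof -
  obtain a b where v: "v = Vx a b" "a < m" "3 \<le> b" "b < l!a" "l!a \<le> b + 2"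
    using assms by (auto simp: W_side_def)
  define L where "L = l!a"
  have v_pen: "v \<in> penultimate_block" using assms by (simp add: penultimate_block_def)
  have key_v: "colour_key v = (1, b + 3 - L, a)"
    using colour_key_W_side assms v(1) by (simp add: L_def)
  let ?Y = "{w\<in>inner. colour_key w < colour_key v \<and> G v w}"
  have Y: "(w = Vx a (L - 4) \<and> b = L - 2) \<or> (w = Vx a (L - 3) \<and> a \<noteq> m - 1)" if "w \<in> ?Y" for w
    using W_side_inner_neighbour[of a b w] assms that v(1) by (simp add: L_def)
  let ?f = "\<lambda>w. if w = Vx a (L - 4) then Vx a (L - 1) else Vx (m - 1) (l!(m - 1) - 1)"
  show ?thesis
  proof (rule card_earlier_neighbours_le_later_classmates[OF _ v_pen, where Y = ?Y and f = ?f])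
    show "inj_on ?f ?Y"
    proof (rule inj_onI)
      fix x y assume "x \<in> ?Y" "y \<in> ?Y" "?f x = ?f y"
      then show "x = y" using Y[of x] Y[of y] v by (auto simp: L_def split: if_splits)
    qed
    show "?f ` ?Y \<subseteq> {w \<in> penultimate_block. colour_key v < colour_key w}"
    proof
      fix x assume "x \<in> ?f ` ?Y"
      then obtain w where w: "w \<in> ?Y" "x = ?f w" by blast
      from Y[OF w(1)] show "x \<in> {w \<in> penultimate_block. colour_key v < colour_key w}"
      proof
        assume "w = Vx a (L - 4) \<and> b = L - 2"
        moreover have "Vx a (L - 1) \<in> W_side" using v by (auto simp: Vx_in_W_side_iff L_def)
        ultimately show ?thesis
          using w key_v colour_key_W_side[of a "L - 1"] v
          by (auto simp: penultimate_block_def L_def)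
      next
        assume "w = Vx a (L - 3) \<and> a \<noteq> m - 1"
        moreover have "Vx a (L - 3) \<noteq> Vx a (L - 4)" "b + 3 - L \<le> 2" using v by (simp_all add: L_def)
        ultimately show ?thesis
          using w key_v last_vertex_of_longest_path v
          by (auto simp: penultimate_block_def less_prod_def)
      qed
    qed
    show "{w\<in>V. colour_key w < colour_key v \<and> G v w \<and> colour_class w \<noteq> colour_class v} \<subseteq> ?Y"
      using earlier_outside_class_of_penultimate[OF v_pen] by blast
    show "finite ?Y" using finite_blocks(1) by simp
  qed (use blocks_subset_V colour_class_penultimate_block v_pen in auto)
qed

lemma earlier_neighbours_matched_outside_inner:
  assumes "v \<in> V" "v \<notin> inner"
  shows "card {w\<in>V. colour_key w < colour_key v \<and> G v w \<and> colour_class w \<noteq> colour_class v}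
    \<le> card {w\<in>V. colour_class w = colour_class v \<and> colour_key v < colour_key w}"
  using assms V_cases[OF assms(1)] earlier_neighbours_matched_U earlier_neighbours_matched_W
    earlier_neighbours_matched_U_side earlier_neighbours_matched_W_side
    earlier_neighbours_matched_spare
  unfolding final_block_def penultimate_block_def by blast

lemma card_class_outside_inner:
  assumes "v \<in> V" "v \<notin> inner"
  shows "card {w\<in>V. colour_class w = colour_class v} \<le> k"
  using V_cases[OF assms(1)] assms(2) card_penultimate_class card_final_class
    colour_class_penultimate_block colour_class_final_block by metis

lemma card_earlier_conflicts_less_k:
  assumes "v \<in> V"
  shows "card {w\<in>V. colour_key w < colour_key v \<and> (G v w \<or> colour_class w = colour_class v)} < k"
proof (cases "v \<in> inner")
  case True
  then show ?thesis by (rule card_earlier_conflicts_inner)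
next
  case False
  with assms show ?thesis
    using card_earlier_conflicts_less[OF finite_V] card_class_outside_inner
      earlier_neighbours_matched_outside_inner
    by blast
qed

lemma equitable_L_coloring_many_classes:
  assumes "k_assignment V k L"
  shows "\<exists>f. equitable_L_coloring V G k L f"
proof (rule greedy_equitable_L_coloring[OF finite_V inj_on_colour_key assms G_sym graph_sq_irrefl])
  show "colour_class ` V \<subseteq> {..<class_count}" using colour_class_less by auto
qed (simp_all add: class_count_def card_earlier_conflicts_less_k)

end

context theta_square
begin

lemma equitable_L_coloring_exists:
  assumes "k_assignment V k L"
  shows "\<exists>f. equitable_L_coloring V G k L f"
proof (cases "k < card V")
  case True
  interpret theta_square_many_classes l k using True by unfold_locales
  show ?thesis using assms by (rule equitable_L_coloring_many_classes)
next
  case False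
  have "0 < card V" using finite_V U_in_V card_gt_0_iff by blast
  show ?thesis
  proof (rule greedy_equitable_L_coloring[OF finite_V inj_on_colour_key assms G_sym graph_sq_irrefl,
        where part = "\<lambda>_. 0" and T = 1])
    have "0 < real (card V) / real k" using \<open>0 < card V\<close> k_ge_8 by simp
    then show "1 \<le> nat \<lceil>real (card V) / real k\<rceil>" by linarith
    fix v assume "v \<in> V"
    have "card {w\<in>V. colour_key w < colour_key v \<and> (G v w \<or> True)} \<le> card (V - {v})"
      by (intro card_mono) (use finite_V in auto)
    also have "\<dots> < k" using \<open>v \<in> V\<close> finite_V False \<open>0 < card V\<close> by simp
    finally show "card {w\<in>V. colour_key w < colour_key v \<and> (G v w \<or> (0::nat) = 0)} < k" by simp
  qed auto
qed

end

theorem lemma3p3: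
  fixes l :: "nat list" and m :: nat
  assumes "m \<ge> 3" and "length l = m" and "sorted l"
    and "l ! 0 \<ge> 2" and "l ! 1 \<ge> 4"
  shows "\<forall>k \<ge> 2 * m + 2. \<forall>L :: thv \<Rightarrow> 'c set.
           k_assignment (theta_verts l) k L \<longrightarrow>
           (\<exists>f. equitable_L_coloring (theta_verts l) (graph_sq (theta_adj l)) k L f)"
proof (intro allI impI)
  fix k :: nat and L :: "thv \<Rightarrow> 'c set"
  assume "2 * m + 2 \<le> k" and "k_assignment (theta_verts l) k L"
  interpret theta_square l k using assms \<open>2 * m + 2 \<le> k\<close> by unfold_locales auto
  show "\<exists>f. equitable_L_coloring (theta_verts l) (graph_sq (theta_adj l)) k L f"
    using \<open>k_assignment (theta_verts l) k L\<close> by (rule equitable_L_coloring_exists)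
qed

end
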